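(* The conditional logics $\mathsf{CKCEM}$ and $\mathsf{CKCEMID}$ have the uniform interpolation property (UIP), and hence Craig interpolation (CIP).
   Context: Formulas of $\mathcal{L}_\triangleright$: atoms, $\bot$, $\wedge,\vee,\to$, binary $\triangleright$; $\top:=\bot\to\bot$, $\neg A:=A\to\bot$. $\mathsf{CE}$ is the smallest set of formulas containing all instances of classical tautologies and closed under modus ponens and the rule: from $\phi_0\leftrightarrow\phi_1$ and $\psi_0\leftrightarrow\psi_1$ infer $(\phi_0\triangleright\psi_0)\to(\phi_1\triangleright\psi_1)$. Axiom schemes: (CM) $(\phi\triangleright\psi\wedge\theta)\to(\phi\triangleright\psi)\wedge(\phi\triangleright\theta)$; (CC) $(\phi\triangleright\psi)\wedge(\phi\triangleright\theta)\to(\phi\triangleright\psi\wedge\theta)$; (CN) $\phi\triangleright\top$; (CEM) $(\phi\triangleright\psi)\vee(\phi\triangleright\neg\psi)$; (ID) $\phi\triangleright\phi$. $\mathsf{CK}=\mathsf{CE}+(CM)+(CC)+(CN)$, $\mathsf{CKCEM}=\mathsf{CK}+(CEM)$, $\mathsf{CKCEMID}=\mathsf{CKCEM}+(ID)$. $V(\phi)$ is the set of atoms occurring in $\phi$; $\phi$ is $p$-free if $p\notin V(\phi)$. UIP for a logic $L$: for every formula $\phi$ and atom $p$ there are $p$-free formulas $\forall p\,\phi$, $\exists p\,\phi$ with $V(\cdot)\subseteq V(\phi)$ such that $L\vdash\forall p\,\phi\to\phi$; for every $p$-free $\psi$, $L\vdash\psi\to\phi$ implies $L\vdash\psi\to\forall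 p\,\phi$; $L\vdash\phi\to\exists p\,\phi$; for every $p$-free $\psi$, $L\vdash\phi\to\psi$ implies $L\vdash\exists p\,\phi\to\psi$. CIP: whenever $L\vdash\phi\to\psi$ there is $\theta$ with $V(\theta)\subseteq V(\phi)\cap V(\psi)$, $L\vdash\phi\to\theta$, $L\vdash\theta\to\psi$. *)

theory Defs
  imports Main
begin

datatype fm = Atom nat | Bot | And fm fm | Or fm fm | Imp fm fm | Cond fm fm

definition Top :: fm where "Top = Imp Bot Bot"
definition Neg :: "fm \<Rightarrow> fm" where "Neg A = Imp A Bot"
definition Iff :: "fm \<Rightarrow> fm \<Rightarrow> fm" where "Iff A B = And (Imp A B) (Imp B A)"

primrec vars :: "fm \<Rightarrow> nat set" where
  "vars (Atom p) = {p}"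
| "vars Bot = {}"
| "vars (And A B) = vars A \<union> vars B"
| "vars (Or A B) = vars A \<union> vars B"
| "vars (Imp A B) = vars A \<union> vars B"
| "vars (Cond A B) = vars A \<union> vars B"

text \<open>Classical evaluation, treating atoms and conditional formulas as
propositional letters.  A formula is an instance of a classical tautology
iff it is true under every such valuation.\<close>
primrec peval :: "(fm \<Rightarrow> bool) \<Rightarrow> fm \<Rightarrow> bool" where
  "peval v (Atom p) = v (Atom p)"
| "peval v Bot = False"
| "peval v (And A B) = (peval v A \<and> peval v B)"
| "peval v (Or A B) = (peval v A \<or> peval v B)"
| "peval v (Imp A B) = (peval v A \<longrightarrow> peval v B)"
| "peval v (Cond A B) = v (Cond A B)"

definition taut :: "fm \<Rightarrow> bool" where "taut A = (\<forall>v. peval v A)"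

inductive_set CEplus :: "fm set \<Rightarrow> fm set" for Ax :: "fm set" where
  tautI: "taut A \<Longrightarrow> A \<in> CEplus Ax"
| axI: "A \<in> Ax \<Longrightarrow> A \<in> CEplus Ax"
| mp: "Imp A B \<in> CEplus Ax \<Longrightarrow> A \<in> CEplus Ax \<Longrightarrow> B \<in> CEplus Ax"
| rce: "Iff A0 A1 \<in> CEplus Ax \<Longrightarrow> Iff B0 B1 \<in> CEplus Ax \<Longrightarrow>
        Imp (Cond A0 B0) (Cond A1 B1) \<in> CEplus Ax"

definition CE :: "fm set" where "CE = CEplus {}"

definition axCM :: "fm set" where
  "axCM = {Imp (Cond A (And B C)) (And (Cond A B) (Cond A C)) | A B C. True}"
definition axCC :: "fm set" where
  "axCC = {Imp (And (Cond A B) (Cond A C)) (Cond A (And B C)) | A B C. True}"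
definition axCN :: "fm set" where
  "axCN = {Cond A Top | A. True}"
definition axCEM :: "fm set" where
  "axCEM = {Or (Cond A B) (Cond A (Neg B)) | A B. True}"
definition axID :: "fm set" where
  "axID = {Cond A A | A. True}"

definition CK :: "fm set" where "CK = CEplus (axCM \<union> axCC \<union> axCN)"
definition CKCEM :: "fm set" where "CKCEM = CEplus (axCM \<union> axCC \<union> axCN \<union> axCEM)"
definition CKCEMID :: "fm set" where
  "CKCEMID = CEplus (axCM \<union> axCC \<union> axCN \<union> axCEM \<union> axID)"

definition UIP :: "fm set \<Rightarrow> bool" where
  "UIP L = (\<forall>\<phi> p. \<exists>Ap Ep.
      p \<notin> vars Ap \<and> vars Ap \<subseteq> vars \<phi> \<and>
      p \<notin> vars Ep \<and> vars Ep \<subseteq> vars \<phi> \<and>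
      Imp Ap \<phi> \<in> L \<and>
      (\<forall>\<psi>. p \<notin> vars \<psi> \<longrightarrow> Imp \<psi> \<phi> \<in> L \<longrightarrow> Imp \<psi> Ap \<in> L) \<and>
      Imp \<phi> Ep \<in> L \<and>
      (\<forall>\<psi>. p \<notin> vars \<psi> \<longrightarrow> Imp \<phi> \<psi> \<in> L \<longrightarrow> Imp Ep \<psi> \<in> L))"

definition CIP :: "fm set \<Rightarrow> bool" where
  "CIP L = (\<forall>\<phi> \<psi>. Imp \<phi> \<psi> \<in> L \<longrightarrow>
      (\<exists>\<theta>. vars \<theta> \<subseteq> vars \<phi> \<inter> vars \<psi> \<and> Imp \<phi> \<theta> \<in> L \<and> Imp \<theta> \<psi> \<in> L))"

end

theory Submission
  imports Defs
begin

text \<open>Interpolation is proved semantically, with a bound on the conditional depth of the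
  interpolant.  If \<open>\<psi> \<rightarrow> \<phi>\<close> had no interpolant over the common atoms of depth at most that
  of \<open>\<phi>\<close>, then \<open>{\<psi>}\<close> and \<open>{\<not>\<phi>}\<close> could not be separated by such formulas, and a
  Lindenbaum argument for pairs extends them to maximal consistent sets that agree on all common
  formulas up to that depth.  Such pairs, graded by a level, are the worlds of a selection
  function model in which every selection has at most one element, one level lower; so CEM (and
  ID, when present) is valid, while a truth lemma makes \<open>\<psi>\<close> true and \<open>\<phi>\<close> false at the
  starting world.

  Uniform interpolants then come from finiteness: over finitely many atoms and up to a given
  depth there are only finitely many formulas up to provable equivalence.  So \<open>\<forall>p \<phi>\<close> is the
  disjunction of the \<open>p\<close>-free representatives of depth at most that of \<open>\<phi>\<close> which imply
  \<open>\<phi>\<close> (any \<open>p\<close>-free \<open>\<psi>\<close> implying \<open>\<phi>\<close> implies one of them through its bounded interpolant),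
  and \<open>\<exists>p \<phi>\<close> is \<open>\<not>\<forall>p \<not>\<phi>\<close>.\<close>

section \<open>Propositional reasoning\<close>


definition Ands :: "fm list \<Rightarrow> fm" where "Ands xs = foldr And xs Top"
definition Ors :: "fm list \<Rightarrow> fm" where "Ors xs = foldr Or xs Bot"

lemma peval_Top [simp]: "peval v Top" by (simp add: Top_def)
lemma peval_Neg [simp]: "peval v (Neg A) = (\<not> peval v A)" by (simp add: Neg_def)
lemma peval_Iff [simp]: "peval v (Iff A B) = (peval v A = peval v B)" by (auto simp: Iff_def)
lemma peval_Ands [simp]: "peval v (Ands xs) = (\<forall>x\<in>set xs. peval v x)"
  by (induct xs) (auto simp: Ands_def)
lemma peval_Ors [simp]: "peval v (Ors xs) = (\<exists>x\<in>set xs. peval v x)"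
  by (induct xs) (auto simp: Ors_def)

lemma vars_Top [simp]: "vars Top = {}" by (simp add: Top_def)
lemma vars_Neg [simp]: "vars (Neg A) = vars A" by (simp add: Neg_def)
lemma finite_vars: "finite (vars A)"
  by (induct A) auto

lemma CEplus_prop_closed:
  assumes taut: "\<And>v. (\<forall>h\<in>set hs. peval v h) \<Longrightarrow> peval v C" and hs: "set hs \<subseteq> CEplus Ax"
  shows "C \<in> CEplus Ax"
proof -
  have "peval v (foldr Imp hs C) = ((\<forall>h\<in>set hs. peval v h) \<longrightarrow> peval v C)" for v
    by (induct hs) auto
  then have "foldr Imp hs C \<in> CEplus Ax"
    using taut by (auto simp: taut_def intro: CEplus.tautI)
  then show ?thesis
    using hs by (induct hs) (auto intro: CEplus.mp)
qed

lemma CEplus_taut: "(\<And>v. peval v C) \<Longrightarrow> C \<in> CEplus Ax"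
  using CEplus_prop_closed[of "[]" C Ax] by auto
lemma CEplus_prop1:
  "(\<And>v. peval v A \<Longrightarrow> peval v C) \<Longrightarrow> A \<in> CEplus Ax \<Longrightarrow> C \<in> CEplus Ax"
  using CEplus_prop_closed[of "[A]" C Ax] by auto
lemma CEplus_prop2:
  "(\<And>v. peval v A \<Longrightarrow> peval v B \<Longrightarrow> peval v C) \<Longrightarrow> A \<in> CEplus Ax \<Longrightarrow> B \<in> CEplus Ax \<Longrightarrow>
   C \<in> CEplus Ax"
  using CEplus_prop_closed[of "[A, B]" C Ax] by auto
lemma CEplus_prop3:
  "(\<And>v. peval v A \<Longrightarrow> peval v B \<Longrightarrow> peval v D \<Longrightarrow> peval v C) \<Longrightarrow>
   A \<in> CEplus Ax \<Longrightarrow> B \<in> CEplus Ax \<Longrightarrow> D \<in> CEplus Ax \<Longrightarrow> C \<in> CEplus Ax"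
  using CEplus_prop_closed[of "[A, B, D]" C Ax] by auto

definition derives :: "fm set \<Rightarrow> fm set \<Rightarrow> fm \<Rightarrow> bool" where
  "derives Ax T A \<longleftrightarrow> (\<exists>hs. set hs \<subseteq> T \<and> Imp (Ands hs) A \<in> CEplus Ax)"

lemma derives_prop_closed:
  assumes "\<And>v. (\<forall>h\<in>set hs. peval v h) \<Longrightarrow> peval v C" and "\<forall>h\<in>set hs. derives Ax T h"
  shows "derives Ax T C"
  using assms
proof (induct hs arbitrary: C)
  case Nil
  then show ?case
    unfolding derives_def by (intro exI[of _ "[]"]) (auto intro: CEplus_taut)
next
  case (Cons h hs)
  from Cons.prems(2) obtain ks where ks: "set ks \<subseteq> T" "Imp (Ands ks) h \<in> CEplus Ax"
    by (auto simp: derives_def)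
  have "derives Ax T (Imp h C)"
    using Cons by (intro Cons.hyps) auto
  then obtain ls where ls: "set ls \<subseteq> T" "Imp (Ands ls) (Imp h C) \<in> CEplus Ax"
    by (auto simp: derives_def)
  have "Imp (Ands (ks @ ls)) C \<in> CEplus Ax"
    by (rule CEplus_prop2[OF _ ks(2) ls(2)]) auto
  then show ?case
    using ks ls unfolding derives_def by (intro exI[of _ "ks @ ls"]) auto
qed

lemma derives_prop1: "(\<And>v. peval v A \<Longrightarrow> peval v C) \<Longrightarrow> derives Ax T A \<Longrightarrow> derives Ax T C"
  using derives_prop_closed[of "[A]" C Ax T] by auto
lemma derives_prop2:
  "(\<And>v. peval v A \<Longrightarrow> peval v B \<Longrightarrow> peval v C) \<Longrightarrow> derives Ax T A \<Longrightarrow> derives Ax T B \<Longrightarrow>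
   derives Ax T C"
  using derives_prop_closed[of "[A, B]" C Ax T] by auto

lemma derives_mem: "A \<in> T \<Longrightarrow> derives Ax T A"
  unfolding derives_def by (intro exI[of _ "[A]"]) (auto intro: CEplus_taut)
lemma derives_theorem: "A \<in> CEplus Ax \<Longrightarrow> derives Ax T A"
  unfolding derives_def by (intro exI[of _ "[]"]) (auto intro: CEplus_prop1)
lemma derives_mono: "derives Ax T A \<Longrightarrow> T \<subseteq> T' \<Longrightarrow> derives Ax T' A"
  unfolding derives_def by blast

lemma derives_empty_iff: "derives Ax {} A \<longleftrightarrow> A \<in> CEplus Ax"
  by (auto simp: derives_def Ands_def intro: derives_theorem elim: CEplus_prop1[rotated])

lemma derives_deduct: "derives Ax (insert A T) B \<Longrightarrow> derives Ax T (Imp A B)"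
proof -
  assume "derives Ax (insert A T) B"
  then obtain hs where hs: "set hs \<subseteq> insert A T" "Imp (Ands hs) B \<in> CEplus Ax"
    by (auto simp: derives_def)
  have "Imp (Ands (filter (\<lambda>x. x \<noteq> A) hs)) (Imp A B) \<in> CEplus Ax"
    by (rule CEplus_prop1[OF _ hs(2)]) auto
  then show ?thesis
    using hs unfolding derives_def by (intro exI[of _ "filter (\<lambda>x. x \<noteq> A) hs"]) auto
qed

lemma derives_Union_chain:
  assumes "derives Ax (\<Union>\<C>) A" "\<C> \<noteq> {}" "subset.chain \<A> \<C>"
  obtains T where "T \<in> \<C>" "derives Ax T A"
proof -
  obtain hs where hs: "set hs \<subseteq> \<Union>\<C>" "Imp (Ands hs) A \<in> CEplus Ax"
    using assms(1) by (auto simp: derives_def)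
  then obtain T where "T \<in> \<C>" "set hs \<subseteq> T"
    using finite_subset_Union_chain[OF _ _ assms(2,3)] by blast
  then show ?thesis
    using hs(2) that unfolding derives_def by blast
qed

primrec cdepth :: "fm \<Rightarrow> nat" where
  "cdepth (Atom p) = 0"
| "cdepth Bot = 0"
| "cdepth (And A B) = max (cdepth A) (cdepth B)"
| "cdepth (Or A B) = max (cdepth A) (cdepth B)"
| "cdepth (Imp A B) = max (cdepth A) (cdepth B)"
| "cdepth (Cond A B) = Suc (max (cdepth A) (cdepth B))"

lemma cdepth_Top [simp]: "cdepth Top = 0" by (simp add: Top_def)
lemma cdepth_Neg [simp]: "cdepth (Neg A) = cdepth A" by (simp add: Neg_def)

definition bounded_fms :: "nat set \<Rightarrow> nat \<Rightarrow> fm set" where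
  "bounded_fms V n = {\<theta>. vars \<theta> \<subseteq> V \<and> cdepth \<theta> \<le> n}"

lemma bounded_fms_iff: "\<theta> \<in> bounded_fms V n \<longleftrightarrow> vars \<theta> \<subseteq> V \<and> cdepth \<theta> \<le> n"
  by (simp add: bounded_fms_def)

lemma Ands_bounded_fms: "set xs \<subseteq> bounded_fms V n \<Longrightarrow> Ands xs \<in> bounded_fms V n"
  by (induct xs) (auto simp: Ands_def bounded_fms_iff)

lemma Ors_bounded_fms: "set xs \<subseteq> bounded_fms V n \<Longrightarrow> Ors xs \<in> bounded_fms V n"
  by (induct xs) (auto simp: Ors_def bounded_fms_iff)

definition literal :: "fm set \<Rightarrow> fm \<Rightarrow> fm" where
  "literal s g = (if g \<in> s then g else Neg g)"

definition diagram :: "fm list \<Rightarrow> fm set \<Rightarrow> fm" where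
  "diagram gs s = Ands (map (literal s) gs)"

text \<open>Meaningful for finite \<open>S\<close> only: otherwise the list chosen by \<open>SOME\<close> is arbitrary.\<close>

definition dnf :: "fm list \<Rightarrow> fm set set \<Rightarrow> fm" where
  "dnf gs S = Ors (map (diagram gs) (SOME xs. set xs = S))"

lemma dnf_bounded_fms: "set gs \<subseteq> bounded_fms V n \<Longrightarrow> dnf gs S \<in> bounded_fms V n"
proof -
  assume gs: "set gs \<subseteq> bounded_fms V n"
  have "literal s g \<in> bounded_fms V n" if "g \<in> set gs" for s g
  proof -
    have "g \<in> bounded_fms V n"
      using gs that by blast
    then show ?thesis
      by (simp add: literal_def bounded_fms_iff)
  qed
  then have "diagram gs s \<in> bounded_fms V n" for s
    unfolding diagram_def by (intro Ands_bounded_fms) auto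
  then show ?thesis
    unfolding dnf_def by (intro Ors_bounded_fms) auto
qed

section \<open>Maximal consistent sets and inseparable pairs\<close>

locale cem_logic =
  fixes Ax :: "fm set" and withID :: bool
  assumes Ax_eq: "Ax = axCM \<union> axCC \<union> axCN \<union> axCEM \<union> (if withID then axID else {})"
begin

abbreviation L :: "fm set" where "L \<equiv> CEplus Ax"

lemma ax_CM: "Imp (Cond A (And B C)) (And (Cond A B) (Cond A C)) \<in> L"
  by (rule CEplus.axI) (auto simp: Ax_eq axCM_def)
lemma ax_CC: "Imp (And (Cond A B) (Cond A C)) (Cond A (And B C)) \<in> L"
  by (rule CEplus.axI) (auto simp: Ax_eq axCC_def)
lemma ax_CN: "Cond A Top \<in> L"
  by (rule CEplus.axI) (auto simp: Ax_eq axCN_def)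
lemma ax_CEM: "Or (Cond A B) (Cond A (Neg B)) \<in> L"
  by (rule CEplus.axI) (auto simp: Ax_eq axCEM_def)
lemma ax_ID: "withID \<Longrightarrow> Cond A A \<in> L"
  by (rule CEplus.axI) (auto simp: Ax_eq axID_def)

lemma Cond_cong_ant: "Imp A A' \<in> L \<Longrightarrow> Imp A' A \<in> L \<Longrightarrow> Imp (Cond A B) (Cond A' B) \<in> L"
proof -
  assume "Imp A A' \<in> L" "Imp A' A \<in> L"
  then have "Iff A A' \<in> L"
    by (rule CEplus_prop2[rotated]) auto
  then show ?thesis
    by (rule CEplus.rce) (rule CEplus_taut, simp)
qed

lemma Cond_mono: "Imp B B' \<in> L \<Longrightarrow> Imp (Cond A B) (Cond A B') \<in> L"
proof -
  assume "Imp B B' \<in> L"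
  then have "Iff B (And B B') \<in> L"
    by (rule CEplus_prop1[rotated]) auto
  then have c: "Imp (Cond A B) (Cond A (And B B')) \<in> L"
    by (rule CEplus.rce[rotated]) (rule CEplus_taut, simp)
  show ?thesis
    by (rule CEplus_prop2[OF _ c ax_CM]) auto
qed

definition consistent :: "fm set \<Rightarrow> bool" where
  "consistent T \<longleftrightarrow> \<not> derives Ax T Bot"

definition mcs :: "fm set \<Rightarrow> bool" where
  "mcs G \<longleftrightarrow> consistent G \<and> (\<forall>A. A \<in> G \<or> Neg A \<in> G)"

lemma consistent_if_Imp_notin_L: "Imp A B \<notin> L \<Longrightarrow> consistent {A, Neg B}"
proof (rule ccontr)
  assume "Imp A B \<notin> L" "\<not> consistent {A, Neg B}"
  then have "derives Ax {} (Imp (Neg B) (Imp A Bot))"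
    unfolding consistent_def by (blast intro: derives_deduct)
  then have "Imp (Neg B) (Imp A Bot) \<in> L"
    by (simp add: derives_empty_iff)
  then have "Imp A B \<in> L"
    by (rule CEplus_prop1[rotated]) auto
  with \<open>Imp A B \<notin> L\<close> show False ..
qed

lemma mcs_derives: "mcs G \<Longrightarrow> derives Ax G A \<Longrightarrow> A \<in> G"
proof (rule ccontr)
  assume G: "mcs G" and A: "derives Ax G A" "A \<notin> G"
  then have "Neg A \<in> G"
    by (auto simp: mcs_def)
  then have "derives Ax G Bot"
    by (intro derives_prop2[OF _ A(1) derives_mem]) auto
  then show False
    using G by (auto simp: mcs_def consistent_def)
qed

lemma mcs_theorem: "mcs G \<Longrightarrow> A \<in> L \<Longrightarrow> A \<in> G"
  by (simp add: mcs_derives derives_theorem)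

lemma mcs_Bot: "mcs G \<Longrightarrow> Bot \<notin> G"
  by (auto simp: mcs_def consistent_def dest: derives_mem)

lemma mcs_prop_closed:
  "mcs G \<Longrightarrow> set hs \<subseteq> G \<Longrightarrow> (\<And>v. (\<forall>h\<in>set hs. peval v h) \<Longrightarrow> peval v C) \<Longrightarrow> C \<in> G"
  by (rule mcs_derives, assumption, rule derives_prop_closed[of hs]) (auto intro: derives_mem)

lemma mcs_Neg: "mcs G \<Longrightarrow> Neg A \<in> G \<longleftrightarrow> A \<notin> G"
  using mcs_prop_closed[of G "[A, Neg A]" Bot] mcs_Bot by (auto simp: mcs_def)

lemma mcs_And: "mcs G \<Longrightarrow> And A B \<in> G \<longleftrightarrow> A \<in> G \<and> B \<in> G"
proof -
  assume G: "mcs G"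
  have "A \<in> G \<Longrightarrow> B \<in> G \<Longrightarrow> And A B \<in> G"
    by (rule mcs_prop_closed[OF G, of "[A, B]"]) auto
  moreover have "And A B \<in> G \<Longrightarrow> A \<in> G" "And A B \<in> G \<Longrightarrow> B \<in> G"
    by (rule mcs_prop_closed[OF G, of "[And A B]"]; simp)+
  ultimately show ?thesis
    by blast
qed

lemma mcs_Or: "mcs G \<Longrightarrow> Or A B \<in> G \<longleftrightarrow> A \<in> G \<or> B \<in> G"
proof -
  assume G: "mcs G"
  have "A \<in> G \<Longrightarrow> Or A B \<in> G" "B \<in> G \<Longrightarrow> Or A B \<in> G"
    by (rule mcs_prop_closed[OF G, of "[A]"], simp, simp)
      (rule mcs_prop_closed[OF G, of "[B]"], simp, simp)
  moreover have "Or A B \<in> G \<Longrightarrow> Neg A \<in> G \<Longrightarrow> B \<in> G"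
    by (rule mcs_prop_closed[OF G, of "[Or A B, Neg A]"]) auto
  ultimately show ?thesis
    using mcs_Neg[OF G, of A] by blast
qed

lemma mcs_Imp: "mcs G \<Longrightarrow> Imp A B \<in> G \<longleftrightarrow> (A \<in> G \<longrightarrow> B \<in> G)"
proof -
  assume G: "mcs G"
  have "Neg A \<in> G \<Longrightarrow> Imp A B \<in> G" "B \<in> G \<Longrightarrow> Imp A B \<in> G"
    by (rule mcs_prop_closed[OF G, of "[Neg A]"], simp, simp)
      (rule mcs_prop_closed[OF G, of "[B]"], simp, simp)
  moreover have "Imp A B \<in> G \<Longrightarrow> A \<in> G \<Longrightarrow> B \<in> G"
    by (rule mcs_prop_closed[OF G, of "[Imp A B, A]"]) auto
  ultimately show ?thesis
    using mcs_Neg[OF G, of A] by blast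
qed

lemma mcs_peval: "mcs G \<Longrightarrow> peval (\<lambda>x. x \<in> G) A \<longleftrightarrow> A \<in> G"
  by (induct A) (auto simp: mcs_And mcs_Or mcs_Imp mcs_Bot)

lemma mcs_Ands: "mcs G \<Longrightarrow> Ands xs \<in> G \<longleftrightarrow> (\<forall>x\<in>set xs. x \<in> G)"
  using mcs_peval[of G "Ands xs"] mcs_peval[of G] by auto

lemma mcs_Ors: "mcs G \<Longrightarrow> Ors xs \<in> G \<longleftrightarrow> (\<exists>x\<in>set xs. x \<in> G)"
  using mcs_peval[of G "Ors xs"] mcs_peval[of G] by auto

lemma mcs_mp: "mcs G \<Longrightarrow> Imp A B \<in> L \<Longrightarrow> A \<in> G \<Longrightarrow> B \<in> G"
  using mcs_theorem[of G "Imp A B"] mcs_Imp[of G A B] by simp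

definition inseparable :: "nat set \<Rightarrow> nat \<Rightarrow> fm set \<Rightarrow> fm set \<Rightarrow> bool" where
  "inseparable V n T1 T2 \<longleftrightarrow>
     \<not> (\<exists>\<theta>\<in>bounded_fms V n. derives Ax T1 \<theta> \<and> derives Ax T2 (Neg \<theta>))"

lemma inseparable_mono:
  "inseparable V n T1 T2 \<Longrightarrow> S1 \<subseteq> T1 \<Longrightarrow> S2 \<subseteq> T2 \<Longrightarrow> inseparable V n S1 S2"
  unfolding inseparable_def by (meson derives_mono)

lemma inseparable_sym: "inseparable V n T1 T2 \<Longrightarrow> inseparable V n T2 T1"
proof (unfold inseparable_def, clarify)
  fix \<theta> assume sep: "\<not> (\<exists>\<theta>\<in>bounded_fms V n. derives Ax T1 \<theta> \<and> derives Ax T2 (Neg \<theta>))"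
    and \<theta>: "\<theta> \<in> bounded_fms V n" "derives Ax T2 \<theta>" "derives Ax T1 (Neg \<theta>)"
  have "derives Ax T2 (Neg (Neg \<theta>))"
    using \<theta>(2) by (rule derives_prop1[rotated]) simp
  moreover have "Neg \<theta> \<in> bounded_fms V n"
    using \<theta>(1) by (simp add: bounded_fms_iff)
  ultimately show False
    using sep \<theta>(3) by blast
qed

lemma inseparable_consistent: "inseparable V n T1 T2 \<Longrightarrow> consistent T1"
proof (unfold consistent_def, rule notI)
  assume "inseparable V n T1 T2" "derives Ax T1 Bot"
  moreover have "derives Ax T2 (Neg Bot)"
    by (intro derives_theorem CEplus_taut) simp
  ultimately show False
    by (auto simp: inseparable_def bounded_fms_iff)
qed

lemma inseparable_empty: "consistent T \<Longrightarrow> inseparable V n T {}"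
proof (unfold inseparable_def consistent_def, clarify)
  fix \<theta> assume "\<not> derives Ax T Bot" "derives Ax T \<theta>" "derives Ax {} (Neg \<theta>)"
  moreover from this(3) have "derives Ax T (Neg \<theta>)"
    by (rule derives_mono) simp
  ultimately show False
    using derives_prop2[of \<theta> "Neg \<theta>" Bot Ax T] by auto
qed

lemma inseparable_singletons:
  assumes "\<not> inseparable V n {A} {B}"
  obtains \<theta> where "\<theta> \<in> bounded_fms V n" "Imp A \<theta> \<in> L" "Imp \<theta> (Neg B) \<in> L"
proof -
  obtain \<theta> where \<theta>: "\<theta> \<in> bounded_fms V n" "derives Ax {A} \<theta>" "derives Ax {B} (Neg \<theta>)"
    using assms by (auto simp: inseparable_def)
  have "Imp A \<theta> \<in> L" "Imp B (Neg \<theta>) \<in> L"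
    using \<theta>(2,3) by (auto simp: derives_empty_iff dest!: derives_deduct)
  moreover from this(2) have "Imp \<theta> (Neg B) \<in> L"
    by (rule CEplus_prop1[rotated]) auto
  ultimately show ?thesis
    using that \<theta>(1) by blast
qed

lemma inseparable_extend_left:
  assumes "inseparable V n T1 T2"
  obtains G where "T1 \<subseteq> G" "inseparable V n G T2"
    "\<And>A. inseparable V n (insert A G) T2 \<Longrightarrow> A \<in> G"
proof -
  define \<A> where "\<A> = {S. T1 \<subseteq> S \<and> inseparable V n S T2}"
  have chain: "\<Union>\<C> \<in> \<A>" if \<C>: "\<C> \<noteq> {}" "subset.chain \<A> \<C>" for \<C>
  proof -
    have sub: "\<C> \<subseteq> \<A>"
      using \<C>(2) by (auto simp: subset.chain_def)
    have "inseparable V n (\<Union>\<C>) T2"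
    proof (unfold inseparable_def, clarify)
      fix \<theta> assume \<theta>: "\<theta> \<in> bounded_fms V n" "derives Ax (\<Union>\<C>) \<theta>" "derives Ax T2 (Neg \<theta>)"
      obtain S where "S \<in> \<C>" "derives Ax S \<theta>"
        using derives_Union_chain[OF \<theta>(2) \<C>] .
      then show False
        using sub \<theta>(1,3) by (auto simp: \<A>_def inseparable_def)
    qed
    then show ?thesis
      using \<C>(1) sub by (auto simp: \<A>_def)
  qed
  have "T1 \<in> \<A>"
    using assms by (simp add: \<A>_def)
  then obtain M where M: "M \<in> \<A>" and max: "\<forall>X\<in>\<A>. M \<subseteq> X \<longrightarrow> X = M"
    using subset_Zorn_nonempty[of \<A>] chain by blast
  show ?thesis
  proof (rule that)
    show "T1 \<subseteq> M" "inseparable V n M T2"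
      using M by (auto simp: \<A>_def)
    show "A \<in> M" if "inseparable V n (insert A M) T2" for A
    proof -
      have "insert A M \<in> \<A>"
        using M that by (auto simp: \<A>_def)
      then show ?thesis
        using max by blast
    qed
  qed
qed

lemma mcs_if_maximal_inseparable:
  assumes ins: "inseparable V n G T" and max: "\<And>A. inseparable V n (insert A G) T \<Longrightarrow> A \<in> G"
  shows "mcs G"
proof -
  have "A \<in> G \<or> Neg A \<in> G" for A
  proof (rule ccontr)
    assume "\<not> (A \<in> G \<or> Neg A \<in> G)"
    then have "\<not> inseparable V n (insert A G) T" "\<not> inseparable V n (insert (Neg A) G) T"
      using max by blast+
    then obtain \<theta>1 \<theta>2 where
      \<theta>1: "\<theta>1 \<in> bounded_fms V n" "derives Ax (insert A G) \<theta>1" "derives Ax T (Neg \<theta>1)" and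
      \<theta>2: "\<theta>2 \<in> bounded_fms V n" "derives Ax (insert (Neg A) G) \<theta>2" "derives Ax T (Neg \<theta>2)"
      unfolding inseparable_def by blast
    have "derives Ax G (Or \<theta>1 \<theta>2)"
      by (rule derives_prop2[OF _ derives_deduct[OF \<theta>1(2)] derives_deduct[OF \<theta>2(2)]]) auto
    moreover have "derives Ax T (Neg (Or \<theta>1 \<theta>2))"
      by (rule derives_prop2[OF _ \<theta>1(3) \<theta>2(3)]) auto
    moreover have "Or \<theta>1 \<theta>2 \<in> bounded_fms V n"
      using \<theta>1(1) \<theta>2(1) by (simp add: bounded_fms_iff)
    ultimately show False
      using ins unfolding inseparable_def by blast
  qed
  then show ?thesis
    using inseparable_consistent[OF ins] by (simp add: mcs_def)
qed

lemma inseparable_mcs_agree: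
  assumes "inseparable V n G1 G2" "mcs G1" "mcs G2" "\<theta> \<in> bounded_fms V n"
  shows "\<theta> \<in> G1 \<longleftrightarrow> \<theta> \<in> G2"
proof -
  have "\<theta> \<in> H2" if "inseparable V n H1 H2" "mcs H2" "\<theta> \<in> H1" for H1 H2
  proof (rule ccontr)
    assume "\<theta> \<notin> H2"
    then have "Neg \<theta> \<in> H2"
      using that(2) by (simp add: mcs_Neg)
    then show False
      using that(1,3) assms(4) unfolding inseparable_def by (blast intro: derives_mem)
  qed
  then show ?thesis
    using assms(1-3) inseparable_sym by blast
qed

text \<open>Extend the left set maximally against \<open>T2\<close>, then the right set maximally against the
  result; the left set stays maximal because enlarging the right set only destroys
  inseparability.\<close>

lemma inseparable_extend:
  assumes "inseparable V n T1 T2"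
  obtains G1 G2 where "T1 \<subseteq> G1" "T2 \<subseteq> G2" "mcs G1" "mcs G2"
    "\<forall>\<theta>\<in>bounded_fms V n. \<theta> \<in> G1 \<longleftrightarrow> \<theta> \<in> G2"
proof -
  obtain G1 where G1: "T1 \<subseteq> G1" "inseparable V n G1 T2"
    and max1: "\<And>A. inseparable V n (insert A G1) T2 \<Longrightarrow> A \<in> G1"
    using inseparable_extend_left[OF assms] by blast
  obtain G2 where G2: "T2 \<subseteq> G2" "inseparable V n G2 G1"
    and max2: "\<And>A. inseparable V n (insert A G2) G1 \<Longrightarrow> A \<in> G2"
    using inseparable_extend_left[OF inseparable_sym[OF G1(2)]] by blast
  have G12: "inseparable V n G1 G2"
    using inseparable_sym[OF G2(2)] .
  have "mcs G1"
    using G12 by (rule mcs_if_maximal_inseparable) (use max1 inseparable_mono G2(1) in blast)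
  moreover have "mcs G2"
    using G2(2) max2 by (rule mcs_if_maximal_inseparable)
  ultimately show ?thesis
    using that G1(1) G2(1) inseparable_mcs_agree[OF G12] by blast
qed

lemma Imp_mem_L_if_mcs:
  assumes "\<And>G. mcs G \<Longrightarrow> A \<in> G \<Longrightarrow> B \<in> G"
  shows "Imp A B \<in> L"
proof (rule ccontr)
  assume "Imp A B \<notin> L"
  then have "inseparable {} 0 {A, Neg B} {}"
    by (intro inseparable_empty consistent_if_Imp_notin_L)
  then obtain G where "mcs G" "A \<in> G" "Neg B \<in> G"
    by (rule inseparable_extend) blast
  then show False
    using assms mcs_Neg by blast
qed

lemma mcs_Cond_Ands: "mcs G \<Longrightarrow> \<forall>B\<in>set hs. Cond A B \<in> G \<Longrightarrow> Cond A (Ands hs) \<in> G"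
proof (induct hs)
  case Nil
  then show ?case
    using mcs_theorem[OF _ ax_CN] by (simp add: Ands_def)
next
  case (Cons h hs)
  then have "And (Cond A h) (Cond A (Ands hs)) \<in> G"
    by (simp add: mcs_And)
  then show ?case
    using mcs_mp[OF Cons.prems(1) ax_CC] by (simp add: Ands_def)
qed

lemma mcs_Cond_derives: "mcs G \<Longrightarrow> derives Ax {B. Cond A B \<in> G} C \<Longrightarrow> Cond A C \<in> G"
proof -
  assume G: "mcs G" and "derives Ax {B. Cond A B \<in> G} C"
  then obtain hs where hs: "set hs \<subseteq> {B. Cond A B \<in> G}" "Imp (Ands hs) C \<in> L"
    by (auto simp: derives_def)
  show ?thesis
    using mcs_mp[OF G Cond_mono[OF hs(2)] mcs_Cond_Ands[OF G]] hs(1) by blast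
qed

lemma mcs_Cond_contradiction:
  assumes G: "mcs G" and "Cond A C \<in> G" "Cond A (Neg C) \<in> G"
  shows "Cond A Bot \<in> G"
proof (rule mcs_Cond_derives[OF G])
  have "derives Ax {B. Cond A B \<in> G} C" "derives Ax {B. Cond A B \<in> G} (Neg C)"
    using assms(2,3) by (auto intro: derives_mem)
  then show "derives Ax {B. Cond A B \<in> G} Bot"
    by (intro derives_prop2[of C "Neg C" Bot]) auto
qed

lemma mcs_Cond_CEM: "mcs G \<Longrightarrow> Cond A B \<notin> G \<Longrightarrow> Cond A (Neg B) \<in> G"
  using mcs_theorem[OF _ ax_CEM, of G A B] by (simp add: mcs_Or)

lemma mcs_Cond_cong_ant:
  "mcs G \<Longrightarrow> Imp A A' \<in> L \<Longrightarrow> Imp A' A \<in> L \<Longrightarrow> Cond A B \<in> G \<longleftrightarrow> Cond A' B \<in> G"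
  using Cond_cong_ant[of A A' B] Cond_cong_ant[of A' A B] mcs_mp by blast

lemma mcs_Cond_cong:
  "mcs G \<Longrightarrow> Imp A A' \<in> L \<Longrightarrow> Imp A' A \<in> L \<Longrightarrow> Imp B B' \<in> L \<Longrightarrow> Imp B' B \<in> L \<Longrightarrow>
   Cond A B \<in> G \<longleftrightarrow> Cond A' B' \<in> G"
  using mcs_Cond_cong_ant[of G A A' B] mcs_mp[OF _ Cond_mono[of B B' A']]
    mcs_mp[OF _ Cond_mono[of B' B A']]
  by blast

lemma mcs_Cond_theorem: "mcs G \<Longrightarrow> C \<in> L \<Longrightarrow> Cond A C \<in> G"
  by (rule mcs_Cond_derives) (auto intro: derives_theorem)

lemma mcs_Cond_Bot: "mcs G \<Longrightarrow> Cond A Bot \<in> G \<Longrightarrow> Cond A B \<in> G"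
  by (rule mcs_mp[OF _ Cond_mono[OF CEplus_taut[of "Imp Bot B"]]]) auto

end

section \<open>Selection function semantics\<close>

fun sat :: "('w \<Rightarrow> 'w set \<Rightarrow> 'w set) \<Rightarrow> ('w \<Rightarrow> nat \<Rightarrow> bool) \<Rightarrow> 'w \<Rightarrow> fm \<Rightarrow> bool" where
  "sat f V w (Atom p) = V w p"
| "sat f V w Bot = False"
| "sat f V w (And A B) = (sat f V w A \<and> sat f V w B)"
| "sat f V w (Or A B) = (sat f V w A \<or> sat f V w B)"
| "sat f V w (Imp A B) = (sat f V w A \<longrightarrow> sat f V w B)"
| "sat f V w (Cond A B) = (\<forall>u\<in>f w {x. sat f V x A}. sat f V u B)"

lemma sat_peval: "sat f V w A = peval (\<lambda>x. sat f V w x) A"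
  by (induct A) auto

lemma sat_Top [simp]: "sat f V w Top" by (simp add: Top_def)
lemma sat_Neg [simp]: "sat f V w (Neg A) = (\<not> sat f V w A)" by (simp add: Neg_def)
lemma sat_Iff [simp]: "sat f V w (Iff A B) = (sat f V w A = sat f V w B)" by (auto simp: Iff_def)

context cem_logic
begin

lemma soundness:
  assumes subsingleton: "\<And>w X u v. u \<in> f w X \<Longrightarrow> v \<in> f w X \<Longrightarrow> u = v"
    and reflexive: "\<And>w X. withID \<Longrightarrow> f w X \<subseteq> X"
    and "A \<in> L"
  shows "sat f V w A"
  using \<open>A \<in> L\<close>
proof (induct arbitrary: w)
  case (tautI A)
  then show ?case
    by (simp add: taut_def sat_peval[of f V w A])
next
  case (axI A)
  then show ?case
  proof (simp add: Ax_eq, elim disjE)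
    assume "A \<in> axCEM"
    then obtain C B where "A = Or (Cond C B) (Cond C (Neg B))"
      by (auto simp: axCEM_def)
    then show ?thesis
      using subsingleton[of _ w "{x. sat f V x C}"] by auto
  next
    assume "A \<in> (if withID then axID else {})"
    then obtain C where "withID" "A = Cond C C"
      by (auto simp: axID_def split: if_splits)
    then show ?thesis
      using reflexive[of w "{x. sat f V x C}"] by auto
  qed (auto simp: axCM_def axCC_def axCN_def)
next
  case (mp A B)
  then show ?case
    by auto
next
  case (rce A0 A1 B0 B1)
  then have "{x. sat f V x A0} = {x. sat f V x A1}"
    by auto
  then show ?case
    using rce by auto
qed

end

section \<open>The pair model\<close>

type_synonym world = "nat \<times> fm set \<times> fm set"

abbreviation level :: "world \<Rightarrow> nat" where "level w \<equiv> fst w"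
abbreviation lft :: "world \<Rightarrow> fm set" where "lft w \<equiv> fst (snd w)"
abbreviation rgt :: "world \<Rightarrow> fm set" where "rgt w \<equiv> snd (snd w)"

locale pair_model = cem_logic +
  fixes V1 V2 :: "nat set"
begin

abbreviation V0 :: "nat set" where "V0 \<equiv> V1 \<inter> V2"

text \<open>A world is a level \<open>n\<close> together with two maximal consistent sets that agree on all
  formulas over \<open>V0\<close> of depth at most \<open>n\<close>; the left one describes the formulas over \<open>V1\<close>, the
  right one those over \<open>V2\<close> of depth at most \<open>n\<close>.  A world \<open>w\<close> sees a set \<open>X\<close> only through the
  worlds of level at least \<open>level w - 1\<close> (which is \<open>0\<close> again when \<open>level w = 0\<close>): the
  antecedents of \<open>X\<close> at \<open>w\<close> are the formulas whose extension agrees with \<open>X\<close> there, and the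
  selected world must contain the consequents of all conditionals in \<open>w\<close> with such an
  antecedent.\<close>

definition worlds :: "world set" where
  "worlds = {w. mcs (lft w) \<and> mcs (rgt w) \<and>
                (\<forall>\<theta>\<in>bounded_fms V0 (level w). \<theta> \<in> lft w \<longleftrightarrow> \<theta> \<in> rgt w)}"

definition above :: "nat \<Rightarrow> world set" where
  "above m = {u \<in> worlds. m \<le> level u}"

definition ext_l :: "fm \<Rightarrow> world set" where "ext_l A = {u. A \<in> lft u}"
definition ext_r :: "fm \<Rightarrow> world set" where "ext_r A = {u. A \<in> rgt u}"

definition ants_l :: "world \<Rightarrow> world set \<Rightarrow> fm set" where
  "ants_l w X = {A. X \<inter> above (level w - 1) = ext_l A \<inter> above (level w - 1)}"
definition ants_r :: "world \<Rightarrow> world set \<Rightarrow> fm set" where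
  "ants_r w X =
     {A. cdepth A < level w \<and> X \<inter> above (level w - 1) = ext_r A \<inter> above (level w - 1)}"
definition conseq_l :: "world \<Rightarrow> world set \<Rightarrow> fm set" where
  "conseq_l w X = {B. \<exists>A\<in>ants_l w X. Cond A B \<in> lft w}"
definition conseq_r :: "world \<Rightarrow> world set \<Rightarrow> fm set" where
  "conseq_r w X = {B. cdepth B < level w \<and> (\<exists>A\<in>ants_r w X. Cond A B \<in> rgt w)}"
definition successors :: "world \<Rightarrow> world set \<Rightarrow> world set" where
  "successors w X = {u \<in> worlds. level u = level w - 1 \<and>
                                 conseq_l w X \<subseteq> lft u \<and> conseq_r w X \<subseteq> rgt u}"
definition sel :: "world \<Rightarrow> world set \<Rightarrow> world set" where
  "sel w X = (if w \<in> worlds \<and> (ants_l w X \<noteq> {} \<or> ants_r w X \<noteq> {}) \<and> successors w X \<noteq> {}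
              then {SOME u. u \<in> successors w X} else {})"
definition val :: "world \<Rightarrow> nat \<Rightarrow> bool" where
  "val w p = (if p \<in> V1 then Atom p \<in> lft w else Atom p \<in> rgt w)"

lemma worlds_mcs_l: "w \<in> worlds \<Longrightarrow> mcs (lft w)"
  by (simp add: worlds_def)
lemma worlds_mcs_r: "w \<in> worlds \<Longrightarrow> mcs (rgt w)"
  by (simp add: worlds_def)
lemma worlds_agree: "w \<in> worlds \<Longrightarrow> \<theta> \<in> bounded_fms V0 (level w) \<Longrightarrow> \<theta> \<in> lft w \<longleftrightarrow> \<theta> \<in> rgt w"
  by (simp add: worlds_def)

lemma world_exists:
  assumes "inseparable V0 m T1 T2"
  obtains u where "u \<in> worlds" "level u = m" "T1 \<subseteq> lft u" "T2 \<subseteq> rgt u"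
proof -
  obtain G1 G2 where "T1 \<subseteq> G1" "T2 \<subseteq> G2" "mcs G1" "mcs G2"
    "\<forall>\<theta>\<in>bounded_fms V0 m. \<theta> \<in> G1 \<longleftrightarrow> \<theta> \<in> G2"
    by (rule inseparable_extend[OF assms])
  then show ?thesis
    by (intro that[of "(m, G1, G2)"]) (auto simp: worlds_def)
qed

lemma Imp_if_ext_l_subset:
  assumes "ext_l A \<inter> above m \<subseteq> ext_l A'"
  shows "Imp A A' \<in> L"
proof (rule ccontr)
  assume "Imp A A' \<notin> L"
  then have "inseparable V0 m {A, Neg A'} {}"
    by (intro inseparable_empty consistent_if_Imp_notin_L)
  then obtain u where u: "u \<in> worlds" "level u = m" "A \<in> lft u" "Neg A' \<in> lft u"
    by (rule world_exists) auto
  then have "u \<in> ext_l A \<inter> above m"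
    by (simp add: ext_l_def above_def)
  then have "u \<in> ext_l A'"
    using assms by (rule subsetD[rotated])
  then have "A' \<in> lft u"
    by (simp add: ext_l_def)
  then show False
    using u by (simp add: mcs_Neg worlds_mcs_l)
qed

lemma Imp_if_ext_r_subset:
  assumes "ext_r A \<inter> above m \<subseteq> ext_r A'"
  shows "Imp A A' \<in> L"
proof (rule ccontr)
  assume "Imp A A' \<notin> L"
  then have "inseparable V0 m {} {A, Neg A'}"
    by (intro inseparable_sym[OF inseparable_empty] consistent_if_Imp_notin_L)
  then obtain u where u: "u \<in> worlds" "level u = m" "A \<in> rgt u" "Neg A' \<in> rgt u"
    by (rule world_exists) auto
  then have "u \<in> ext_r A \<inter> above m"
    by (simp add: ext_r_def above_def)
  then have "u \<in> ext_r A'"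
    using assms by (rule subsetD[rotated])
  then have "A' \<in> rgt u"
    by (simp add: ext_r_def)
  then show False
    using u by (simp add: mcs_Neg worlds_mcs_r)
qed

lemma interpolant_if_ext_l_subset_ext_r:
  assumes "ext_l A \<inter> above m \<subseteq> ext_r A'"
  obtains C where "C \<in> bounded_fms V0 m" "Imp A C \<in> L" "Imp C A' \<in> L"
proof (cases "inseparable V0 m {A} {Neg A'}")
  case True
  then obtain u where u: "u \<in> worlds" "level u = m" "A \<in> lft u" "Neg A' \<in> rgt u"
    by (rule world_exists) auto
  then have "u \<in> ext_l A \<inter> above m"
    by (simp add: ext_l_def above_def)
  then have "u \<in> ext_r A'"
    using assms by (rule subsetD[rotated])
  then have "A' \<in> rgt u"
    by (simp add: ext_r_def)
  then show ?thesis
    using u by (simp add: mcs_Neg worlds_mcs_r)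
next
  case False
  then obtain C where C: "C \<in> bounded_fms V0 m" "Imp A C \<in> L" "Imp C (Neg (Neg A')) \<in> L"
    by (rule inseparable_singletons)
  from C(3) have "Imp C A' \<in> L"
    by (rule CEplus_prop1[rotated]) auto
  with C(1,2) show ?thesis
    by (rule that)
qed

lemma interpolant_if_ext_r_subset_ext_l:
  assumes "ext_r A' \<inter> above m \<subseteq> ext_l A"
  obtains C where "C \<in> bounded_fms V0 m" "Imp A' C \<in> L" "Imp C A \<in> L"
proof (cases "inseparable V0 m {A'} {Neg A}")
  case True
  then obtain u where u: "u \<in> worlds" "level u = m" "Neg A \<in> lft u" "A' \<in> rgt u"
    by (rule world_exists[OF inseparable_sym]) auto
  then have "u \<in> ext_r A' \<inter> above m"
    by (simp add: ext_r_def above_def)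
  then have "u \<in> ext_l A"
    using assms by (rule subsetD[rotated])
  then have "A \<in> lft u"
    by (simp add: ext_l_def)
  then show ?thesis
    using u by (simp add: mcs_Neg worlds_mcs_l)
next
  case False
  then obtain C where C: "C \<in> bounded_fms V0 m" "Imp A' C \<in> L" "Imp C (Neg (Neg A)) \<in> L"
    by (rule inseparable_singletons)
  from C(3) have "Imp C A \<in> L"
    by (rule CEplus_prop1[rotated]) auto
  with C(1,2) show ?thesis
    by (rule that)
qed

lemma common_equivalent:
  assumes "ext_l A \<inter> above m = ext_r A' \<inter> above m"
  obtains C where "C \<in> bounded_fms V0 m"
    "Imp A C \<in> L" "Imp C A \<in> L" "Imp A' C \<in> L" "Imp C A' \<in> L"
proof -
  have "ext_l A \<inter> above m \<subseteq> ext_r A'" "ext_r A' \<inter> above m \<subseteq> ext_l A"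
    using assms by blast+
  then obtain C D where C: "C \<in> bounded_fms V0 m" "Imp A C \<in> L" "Imp C A' \<in> L"
    and D: "Imp A' D \<in> L" "Imp D A \<in> L"
    by (elim interpolant_if_ext_l_subset_ext_r interpolant_if_ext_r_subset_ext_l)
  have "Imp C A \<in> L"
    by (rule CEplus_prop3[OF _ C(3) D]) auto
  moreover have "Imp A' C \<in> L"
    by (rule CEplus_prop3[OF _ D C(2)]) auto
  ultimately show ?thesis
    using that C by blast
qed

lemma conseq_l_eq:
  assumes "A \<in> ants_l w X" "w \<in> worlds"
  shows "conseq_l w X = {B. Cond A B \<in> lft w}"
proof -
  have "Cond A' B \<in> lft w \<longleftrightarrow> Cond A B \<in> lft w" if "A' \<in> ants_l w X" for A' B
  proof -
    have "ext_l A' \<inter> above (level w - 1) = ext_l A \<inter> above (level w - 1)"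
      using assms(1) that by (simp add: ants_l_def)
    then have "ext_l A' \<inter> above (level w - 1) \<subseteq> ext_l A"
      "ext_l A \<inter> above (level w - 1) \<subseteq> ext_l A'"
      by blast+
    then show ?thesis
      by (intro mcs_Cond_cong_ant[OF worlds_mcs_l[OF assms(2)]] Imp_if_ext_l_subset)
  qed
  then show ?thesis
    using assms(1) unfolding conseq_l_def by blast
qed

lemma conseq_r_eq:
  assumes "A \<in> ants_r w X" "w \<in> worlds"
  shows "conseq_r w X = {B. cdepth B < level w \<and> Cond A B \<in> rgt w}"
proof -
  have "Cond A' B \<in> rgt w \<longleftrightarrow> Cond A B \<in> rgt w" if "A' \<in> ants_r w X" for A' B
  proof -
    have "ext_r A' \<inter> above (level w - 1) = ext_r A \<inter> above (level w - 1)"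
      using assms(1) that by (simp add: ants_r_def)
    then have "ext_r A' \<inter> above (level w - 1) \<subseteq> ext_r A"
      "ext_r A \<inter> above (level w - 1) \<subseteq> ext_r A'"
      by blast+
    then show ?thesis
      by (intro mcs_Cond_cong_ant[OF worlds_mcs_r[OF assms(2)]] Imp_if_ext_r_subset)
  qed
  then show ?thesis
    using assms(1) unfolding conseq_r_def by blast
qed

text \<open>Both antecedents are equivalent to one formula over \<open>V0\<close> of depth below \<open>level w\<close>, on
  which the two components of \<open>w\<close> agree.\<close>

lemma Cond_transfer:
  assumes w: "w \<in> worlds" and A: "A \<in> ants_l w X" and A': "A' \<in> ants_r w X"
    and \<theta>: "\<theta> \<in> bounded_fms V0 (level w - 1)"
  shows "Cond A \<theta> \<in> lft w \<longleftrightarrow> Cond A' \<theta> \<in> rgt w"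
proof -
  have "ext_l A \<inter> above (level w - 1) = ext_r A' \<inter> above (level w - 1)"
    using A A' by (simp add: ants_l_def ants_r_def)
  then obtain C where C: "C \<in> bounded_fms V0 (level w - 1)"
    "Imp A C \<in> L" "Imp C A \<in> L" "Imp A' C \<in> L" "Imp C A' \<in> L"
    by (rule common_equivalent)
  have "0 < level w"
    using A' by (simp add: ants_r_def)
  then have "Cond C \<theta> \<in> bounded_fms V0 (level w)"
    using C(1) \<theta> by (auto simp: bounded_fms_iff)
  have "Cond A \<theta> \<in> lft w \<longleftrightarrow> Cond C \<theta> \<in> lft w"
    by (rule mcs_Cond_cong_ant[OF worlds_mcs_l[OF w] C(2,3)])
  also have "\<dots> \<longleftrightarrow> Cond C \<theta> \<in> rgt w"
    by (rule worlds_agree[OF w]) fact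
  also have "\<dots> \<longleftrightarrow> Cond A' \<theta> \<in> rgt w"
    by (rule mcs_Cond_cong_ant[OF worlds_mcs_r[OF w] C(5,4)])
  finally show ?thesis .
qed

lemma Cond_lft_if_derives:
  "w \<in> worlds \<Longrightarrow> A \<in> ants_l w X \<Longrightarrow> derives Ax (conseq_l w X) \<theta> \<Longrightarrow> Cond A \<theta> \<in> lft w"
  using mcs_Cond_derives[OF worlds_mcs_l] conseq_l_eq by simp

lemma Cond_rgt_if_derives:
  "w \<in> worlds \<Longrightarrow> A \<in> ants_r w X \<Longrightarrow> derives Ax (conseq_r w X) \<theta> \<Longrightarrow> Cond A \<theta> \<in> rgt w"
  using mcs_Cond_derives[OF worlds_mcs_r] conseq_r_eq derives_mono[of Ax "conseq_r w X" \<theta>]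
  by (metis (no_types, lifting) mem_Collect_eq subsetI)

lemma Cond_rgt_if_derives_l:
  assumes w: "w \<in> worlds" and A': "A' \<in> ants_r w X"
    and \<theta>: "\<theta> \<in> bounded_fms V0 (level w - 1)" "derives Ax (conseq_l w X) \<theta>"
  shows "Cond A' \<theta> \<in> rgt w"
proof (cases "ants_l w X = {}")
  case True
  then have "\<theta> \<in> L"
    using \<theta>(2) by (simp add: conseq_l_def derives_empty_iff)
  then show ?thesis
    using mcs_Cond_theorem[OF worlds_mcs_r[OF w]] by blast
next
  case False
  then obtain A where "A \<in> ants_l w X"
    by blast
  then show ?thesis
    using Cond_transfer[OF w _ A' \<theta>(1)] Cond_lft_if_derives[OF w _ \<theta>(2)] by blast
qed

lemma conseq_inseparable:
  assumes w: "w \<in> worlds" and bot: "Bot \<notin> conseq_l w X" "Bot \<notin> conseq_r w X"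
  shows "inseparable V0 (level w - 1) (conseq_l w X) (conseq_r w X)"
proof (unfold inseparable_def, clarify)
  fix \<theta> assume \<theta>: "\<theta> \<in> bounded_fms V0 (level w - 1)"
    "derives Ax (conseq_l w X) \<theta>" "derives Ax (conseq_r w X) (Neg \<theta>)"
  have G: "mcs (lft w)" "mcs (rgt w)"
    using w by (simp_all add: worlds_mcs_l worlds_mcs_r)
  show False
  proof (cases "ants_r w X = {}")
    case True
    then have "Neg \<theta> \<in> L"
      using \<theta>(3) by (simp add: conseq_r_def derives_empty_iff)
    show False
    proof (cases "ants_l w X = {}")
      case True
      then have "\<theta> \<in> L"
        using \<theta>(2) by (simp add: conseq_l_def derives_empty_iff)
      have "Bot \<in> L"
        by (rule CEplus_prop2[OF _ \<open>\<theta> \<in> L\<close> \<open>Neg \<theta> \<in> L\<close>]) auto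
      then show False
        using mcs_theorem[OF G(1)] mcs_Bot[OF G(1)] by blast
    next
      case False
      then obtain A where A: "A \<in> ants_l w X"
        by blast
      have "Cond A Bot \<in> lft w"
        using mcs_Cond_contradiction[OF G(1) Cond_lft_if_derives[OF w A \<theta>(2)]
            mcs_Cond_theorem[OF G(1) \<open>Neg \<theta> \<in> L\<close>]] .
      then show False
        using bot(1) A by (auto simp: conseq_l_def)
    qed
  next
    case False
    then obtain A' where A': "A' \<in> ants_r w X"
      by blast
    have "Cond A' Bot \<in> rgt w"
      using mcs_Cond_contradiction[OF G(2) Cond_rgt_if_derives_l[OF w A' \<theta>(1,2)]
          Cond_rgt_if_derives[OF w A' \<theta>(3)]] .
    moreover have "cdepth Bot < level w"
      using A' by (auto simp: ants_r_def)
    ultimately show False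
      using bot(2) A' by (auto simp: conseq_r_def)
  qed
qed

lemma successors_nonempty:
  assumes "w \<in> worlds" "Bot \<notin> conseq_l w X" "Bot \<notin> conseq_r w X"
  shows "successors w X \<noteq> {}"
proof -
  obtain u where "u \<in> worlds" "level u = level w - 1" "conseq_l w X \<subseteq> lft u" "conseq_r w X \<subseteq> rgt u"
    using world_exists[OF conseq_inseparable[OF assms]] .
  then have "u \<in> successors w X"
    by (simp add: successors_def)
  then show ?thesis
    by blast
qed

lemma sel_successors: "u \<in> sel w X \<Longrightarrow> u \<in> successors w X"
  by (auto simp: sel_def some_in_eq split: if_splits)

lemma sel_worlds: "u \<in> sel w X \<Longrightarrow> u \<in> worlds"
  using sel_successors by (simp add: successors_def)

lemma sel_subsingleton: "u \<in> sel w X \<Longrightarrow> v \<in> sel w X \<Longrightarrow> u = v"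
  by (auto simp: sel_def split: if_splits)

lemma sel_nonempty:
  "w \<in> worlds \<Longrightarrow> ants_l w X \<noteq> {} \<or> ants_r w X \<noteq> {} \<Longrightarrow> successors w X \<noteq> {} \<Longrightarrow> sel w X \<noteq> {}"
  by (simp add: sel_def)

lemma sel_reflexive:
  assumes withID
  shows "sel w X \<subseteq> X"
proof
  fix u assume u: "u \<in> sel w X"
  then have w: "w \<in> worlds" and ants: "ants_l w X \<noteq> {} \<or> ants_r w X \<noteq> {}"
    by (auto simp: sel_def split: if_splits)
  have u': "u \<in> above (level w - 1)" "conseq_l w X \<subseteq> lft u" "conseq_r w X \<subseteq> rgt u"
    using sel_successors[OF u] by (auto simp: successors_def above_def)
  show "u \<in> X"
  proof (cases "ants_l w X = {}")
    case False
    then obtain A where A: "A \<in> ants_l w X"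
      by blast
    have "A \<in> lft u"
      using u'(2) conseq_l_eq[OF A w] mcs_theorem[OF worlds_mcs_l[OF w] ax_ID[OF assms]] by auto
    then show ?thesis
      using A u'(1) by (auto simp: ants_l_def ext_l_def)
  next
    case True
    then obtain A where A: "A \<in> ants_r w X"
      using ants by blast
    have "A \<in> rgt u"
      using u'(3) conseq_r_eq[OF A w] mcs_theorem[OF worlds_mcs_r[OF w] ax_ID[OF assms]] A
      by (auto simp: ants_r_def)
    then show ?thesis
      using A u'(1) by (auto simp: ants_r_def ext_r_def)
  qed
qed

lemma Cond_lft_iff_sel:
  assumes w: "w \<in> worlds" and A: "A \<in> ants_l w X"
  shows "Cond A B \<in> lft w \<longleftrightarrow> (\<forall>u\<in>sel w X. B \<in> lft u)"
proof
  assume "Cond A B \<in> lft w"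
  then have "B \<in> conseq_l w X"
    using conseq_l_eq[OF A w] by simp
  then show "\<forall>u\<in>sel w X. B \<in> lft u"
    by (auto dest!: sel_successors simp: successors_def)
next
  assume sel: "\<forall>u\<in>sel w X. B \<in> lft u"
  show "Cond A B \<in> lft w"
  proof (rule ccontr)
    assume n: "Cond A B \<notin> lft w"
    have G: "mcs (lft w)"
      using w by (rule worlds_mcs_l)
    have nb: "Cond A Bot \<notin> lft w"
      using n mcs_Cond_Bot[OF G] by blast
    have "Bot \<notin> conseq_l w X"
      using conseq_l_eq[OF A w] nb by simp
    moreover have "Bot \<notin> conseq_r w X"
    proof
      assume "Bot \<in> conseq_r w X"
      then obtain A' where "A' \<in> ants_r w X" "Cond A' Bot \<in> rgt w"
        by (auto simp: conseq_r_def)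
      then show False
        using Cond_transfer[OF w A, of A' Bot] nb by (simp add: bounded_fms_iff)
    qed
    ultimately obtain u where u: "u \<in> sel w X"
      using sel_nonempty[OF w _ successors_nonempty[OF w]] A by blast
    have "Neg B \<in> conseq_l w X"
      using conseq_l_eq[OF A w] mcs_Cond_CEM[OF G n] by simp
    then have "Neg B \<in> lft u"
      using sel_successors[OF u] by (auto simp: successors_def)
    then show False
      using sel u sel_worlds[OF u] by (simp add: mcs_Neg worlds_mcs_l)
  qed
qed

lemma Cond_rgt_iff_sel:
  assumes w: "w \<in> worlds" and A: "A \<in> ants_r w X" and B: "cdepth B < level w"
  shows "Cond A B \<in> rgt w \<longleftrightarrow> (\<forall>u\<in>sel w X. B \<in> rgt u)"
proof
  assume "Cond A B \<in> rgt w"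
  then have "B \<in> conseq_r w X"
    using conseq_r_eq[OF A w] B by simp
  then show "\<forall>u\<in>sel w X. B \<in> rgt u"
    by (auto dest!: sel_successors simp: successors_def)
next
  assume sel: "\<forall>u\<in>sel w X. B \<in> rgt u"
  show "Cond A B \<in> rgt w"
  proof (rule ccontr)
    assume n: "Cond A B \<notin> rgt w"
    have G: "mcs (rgt w)"
      using w by (rule worlds_mcs_r)
    have nb: "Cond A Bot \<notin> rgt w"
      using n mcs_Cond_Bot[OF G] by blast
    have "Bot \<notin> conseq_r w X"
      using conseq_r_eq[OF A w] nb by simp
    moreover have "Bot \<notin> conseq_l w X"
    proof
      assume "Bot \<in> conseq_l w X"
      then obtain A' where "A' \<in> ants_l w X" "Cond A' Bot \<in> lft w"
        by (auto simp: conseq_l_def)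
      then show False
        using Cond_transfer[OF w _ A, of A' Bot] nb by (simp add: bounded_fms_iff)
    qed
    ultimately obtain u where u: "u \<in> sel w X"
      using sel_nonempty[OF w _ successors_nonempty[OF w]] A by blast
    have "Neg B \<in> conseq_r w X"
      using conseq_r_eq[OF A w] mcs_Cond_CEM[OF G n] B by simp
    then have "Neg B \<in> rgt u"
      using sel_successors[OF u] by (auto simp: successors_def)
    then show False
      using sel u sel_worlds[OF u] by (simp add: mcs_Neg worlds_mcs_r)
  qed
qed

lemma truth_l: "w \<in> worlds \<Longrightarrow> vars \<chi> \<subseteq> V1 \<Longrightarrow> sat sel val w \<chi> \<longleftrightarrow> \<chi> \<in> lft w"
proof (induct \<chi> arbitrary: w)
  case (Cond A B)
  define X where "X = {x. sat sel val x A}"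
  have "A \<in> ants_l w X"
    using Cond by (auto simp: ants_l_def X_def ext_l_def above_def)
  moreover have "sat sel val u B \<longleftrightarrow> B \<in> lft u" if "u \<in> sel w X" for u
    using Cond.hyps(2) sel_worlds[OF that] Cond.prems(2) by simp
  ultimately show ?case
    using Cond_lft_iff_sel[OF Cond.prems(1)] by (simp add: X_def)
qed (auto simp: val_def mcs_And mcs_Or mcs_Imp mcs_Bot worlds_mcs_l)

lemma truth_r:
  "w \<in> worlds \<Longrightarrow> vars \<chi> \<subseteq> V2 \<Longrightarrow> cdepth \<chi> \<le> level w \<Longrightarrow> sat sel val w \<chi> \<longleftrightarrow> \<chi> \<in> rgt w"
proof (induct \<chi> arbitrary: w)
  case (Atom p)
  then show ?case
    using worlds_agree[of w "Atom p"] by (auto simp: val_def bounded_fms_iff)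
next
  case (Cond A B)
  define X where "X = {x. sat sel val x A}"
  have depth: "cdepth A < level w" "cdepth B < level w"
    using Cond.prems(3) by auto
  have "A \<in> ants_r w X"
    using Cond depth by (auto simp: ants_r_def X_def ext_r_def above_def)
  moreover have "sat sel val u B \<longleftrightarrow> B \<in> rgt u" if "u \<in> sel w X" for u
    using Cond.hyps(2) sel_successors[OF that] Cond.prems(2) depth
    by (simp add: successors_def)
  ultimately show ?case
    using Cond_rgt_iff_sel[OF Cond.prems(1) _ depth(2)] by (simp add: X_def)
qed (auto simp: mcs_And mcs_Or mcs_Imp mcs_Bot worlds_mcs_r)

lemma interpolant_bounded:
  assumes "Imp \<psi> \<phi> \<in> L" "vars \<psi> \<subseteq> V1" "vars \<phi> \<subseteq> V2"
  obtains \<theta> where "\<theta> \<in> bounded_fms V0 (cdepth \<phi>)" "Imp \<psi> \<theta> \<in> L" "Imp \<theta> \<phi> \<in> L"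
proof (cases "inseparable V0 (cdepth \<phi>) {\<psi>} {Neg \<phi>}")
  case True
  then obtain u where u: "u \<in> worlds" "level u = cdepth \<phi>" "\<psi> \<in> lft u" "Neg \<phi> \<in> rgt u"
    by (rule world_exists) auto
  have "sat sel val u \<psi>"
    using truth_l[OF u(1) assms(2)] u(3) by simp
  moreover have "\<not> sat sel val u \<phi>"
    using truth_r[OF u(1) assms(3)] u(2,4) by (simp add: mcs_Neg worlds_mcs_r[OF u(1)])
  moreover have "sat sel val u (Imp \<psi> \<phi>)"
    using soundness[OF sel_subsingleton sel_reflexive assms(1)] .
  ultimately show ?thesis
    by simp
next
  case False
  then obtain \<theta> where \<theta>: "\<theta> \<in> bounded_fms V0 (cdepth \<phi>)" "Imp \<psi> \<theta> \<in> L" "Imp \<theta> (Neg (Neg \<phi>)) \<in> L"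
    by (rule inseparable_singletons)
  from \<theta>(3) have "Imp \<theta> \<phi> \<in> L"
    by (rule CEplus_prop1[rotated]) auto
  with \<theta>(1,2) show ?thesis
    by (rule that)
qed

end

context cem_logic
begin

lemma bounded_interpolation:
  assumes "Imp \<psi> \<phi> \<in> L"
  obtains \<theta> where "\<theta> \<in> bounded_fms (vars \<psi> \<inter> vars \<phi>) (cdepth \<phi>)" "Imp \<psi> \<theta> \<in> L" "Imp \<theta> \<phi> \<in> L"
proof -
  interpret pair_model Ax withID "vars \<psi>" "vars \<phi>"
    by unfold_locales (rule Ax_eq)
  show ?thesis
    using interpolant_bounded[OF assms] that by blast
qed

lemma CIP_L: "CIP L"
proof (unfold CIP_def, intro allI impI)
  fix \<phi> \<psi> assume "Imp \<phi> \<psi> \<in> L"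
  then obtain \<theta> where "\<theta> \<in> bounded_fms (vars \<phi> \<inter> vars \<psi>) (cdepth \<psi>)" "Imp \<phi> \<theta> \<in> L" "Imp \<theta> \<psi> \<in> L"
    by (rule bounded_interpolation)
  then show "\<exists>\<theta>. vars \<theta> \<subseteq> vars \<phi> \<inter> vars \<psi> \<and> Imp \<phi> \<theta> \<in> L \<and> Imp \<theta> \<psi> \<in> L"
    by (auto simp: bounded_fms_iff)
qed

section \<open>Finitely many formulas up to equivalence\<close>

definition equivalent :: "fm \<Rightarrow> fm \<Rightarrow> bool" where
  "equivalent A B \<longleftrightarrow> Imp A B \<in> L \<and> Imp B A \<in> L"

lemma mcs_diagram: "mcs D \<Longrightarrow> s \<subseteq> set gs \<Longrightarrow> diagram gs s \<in> D \<longleftrightarrow> D \<inter> set gs = s"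
proof -
  assume D: "mcs D" and s: "s \<subseteq> set gs"
  have "diagram gs s \<in> D \<longleftrightarrow> (\<forall>g\<in>set gs. literal s g \<in> D)"
    by (simp add: diagram_def mcs_Ands[OF D])
  also have "\<dots> \<longleftrightarrow> (\<forall>g\<in>set gs. g \<in> D \<longleftrightarrow> g \<in> s)"
    by (simp add: literal_def mcs_Neg[OF D]) blast
  also have "\<dots> \<longleftrightarrow> D \<inter> set gs = s"
    using s by blast
  finally show ?thesis .
qed

lemma mcs_dnf: "mcs D \<Longrightarrow> S \<subseteq> Pow (set gs) \<Longrightarrow> dnf gs S \<in> D \<longleftrightarrow> D \<inter> set gs \<in> S"
proof -
  assume D: "mcs D" and S: "S \<subseteq> Pow (set gs)"
  then have "finite S"
    by (meson finite_Pow_iff finite_set finite_subset)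
  then have "set (SOME xs. set xs = S) = S"
    by (metis (mono_tags) finite_list someI_ex)
  then have "dnf gs S \<in> D \<longleftrightarrow> (\<exists>s\<in>S. diagram gs s \<in> D)"
    by (simp add: dnf_def mcs_Ors[OF D])
  also have "\<dots> \<longleftrightarrow> D \<inter> set gs \<in> S"
    using mcs_diagram[OF D] S by blast
  finally show ?thesis .
qed

text \<open>The representative of \<open>\<theta>\<close> is the disjunction of the diagrams over \<open>G\<close> of the maximal
  consistent sets containing \<open>\<theta>\<close>.\<close>

lemma finite_representatives_if_determined:
  assumes fin: "finite G" and G: "G \<subseteq> bounded_fms V d"
    and det: "\<And>\<theta> \<Gamma> \<Gamma>'. \<theta> \<in> F \<Longrightarrow> mcs \<Gamma> \<Longrightarrow> mcs \<Gamma>' \<Longrightarrow> \<Gamma> \<inter> G = \<Gamma>' \<inter> G \<Longrightarrow> \<theta> \<in> \<Gamma> \<longleftrightarrow> \<theta> \<in> \<Gamma>'"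
  shows "\<exists>R. finite R \<and> R \<subseteq> bounded_fms V d \<and> (\<forall>\<theta>\<in>F. \<exists>r\<in>R. equivalent \<theta> r)"
proof -
  obtain gs where gs: "set gs = G"
    using finite_list[OF fin] by blast
  have "\<exists>r\<in>dnf gs ` Pow (Pow G). equivalent \<theta> r" if "\<theta> \<in> F" for \<theta>
  proof
    define S where "S = {\<Gamma> \<inter> G | \<Gamma>. mcs \<Gamma> \<and> \<theta> \<in> \<Gamma>}"
    have "S \<subseteq> Pow G"
      by (auto simp: S_def)
    then show "dnf gs S \<in> dnf gs ` Pow (Pow G)"
      by simp
    have "dnf gs S \<in> D \<longleftrightarrow> \<theta> \<in> D" if "mcs D" for D
    proof -
      have "dnf gs S \<in> D \<longleftrightarrow> (\<exists>\<Gamma>. mcs \<Gamma> \<and> \<theta> \<in> \<Gamma> \<and> D \<inter> G = \<Gamma> \<inter> G)"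
        using mcs_dnf[OF that, of S gs] \<open>S \<subseteq> Pow G\<close> gs unfolding S_def by blast
      also have "\<dots> \<longleftrightarrow> \<theta> \<in> D"
        using det[OF \<open>\<theta> \<in> F\<close> _ that] that by blast
      finally show ?thesis .
    qed
    then show "equivalent \<theta> (dnf gs S)"
      by (auto simp: equivalent_def intro!: Imp_mem_L_if_mcs)
  qed
  moreover have "dnf gs ` Pow (Pow G) \<subseteq> bounded_fms V d"
    using G gs dnf_bounded_fms by blast
  ultimately show ?thesis
    using fin by (intro exI[of _ "dnf gs ` Pow (Pow G)"]) auto
qed

lemma mcs_agree_on_bounded_fms:
  assumes "\<theta> \<in> bounded_fms V d" "mcs \<Gamma>" "mcs \<Gamma>'"
    and atoms: "\<And>p. p \<in> V \<Longrightarrow> Atom p \<in> \<Gamma> \<longleftrightarrow> Atom p \<in> \<Gamma>'"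
    and conds: "\<And>A B. Cond A B \<in> bounded_fms V d \<Longrightarrow> Cond A B \<in> \<Gamma> \<longleftrightarrow> Cond A B \<in> \<Gamma>'"
  shows "\<theta> \<in> \<Gamma> \<longleftrightarrow> \<theta> \<in> \<Gamma>'"
  using assms(1)
proof (induct \<theta>)
  case (Cond A B)
  then show ?case
    using conds by blast
qed (use assms(2-4) in \<open>auto simp: bounded_fms_iff mcs_And mcs_Or mcs_Imp mcs_Bot\<close>)

lemma mcs_agree_by_Cond_representatives:
  assumes R: "\<forall>\<theta>\<in>bounded_fms V d. \<exists>r\<in>R. equivalent \<theta> r"
    and \<theta>: "\<theta> \<in> bounded_fms V (Suc d)" and \<Gamma>: "mcs \<Gamma>" "mcs \<Gamma>'"
    and agree: "\<Gamma> \<inter> (Atom ` V \<union> (\<lambda>(a, c). Cond a c) ` (R \<times> R)) =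
                \<Gamma>' \<inter> (Atom ` V \<union> (\<lambda>(a, c). Cond a c) ` (R \<times> R))"
  shows "\<theta> \<in> \<Gamma> \<longleftrightarrow> \<theta> \<in> \<Gamma>'"
proof (rule mcs_agree_on_bounded_fms[OF \<theta> \<Gamma>])
  show "Atom p \<in> \<Gamma> \<longleftrightarrow> Atom p \<in> \<Gamma>'" if "p \<in> V" for p
    using agree that by blast
  show "Cond A B \<in> \<Gamma> \<longleftrightarrow> Cond A B \<in> \<Gamma>'" if "Cond A B \<in> bounded_fms V (Suc d)" for A B
  proof -
    have "A \<in> bounded_fms V d" "B \<in> bounded_fms V d"
      using that by (auto simp: bounded_fms_iff)
    then obtain a c where a: "a \<in> R" "equivalent A a" and c: "c \<in> R" "equivalent B c"
      using R by blast
    then have "Cond a c \<in> \<Gamma> \<longleftrightarrow> Cond a c \<in> \<Gamma>'"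
      using agree by blast
    moreover have "Cond A B \<in> \<Delta> \<longleftrightarrow> Cond a c \<in> \<Delta>" if "mcs \<Delta>" for \<Delta>
      using a(2) c(2) by (intro mcs_Cond_cong[OF that]) (simp_all add: equivalent_def)
    ultimately show ?thesis
      using \<Gamma> by blast
  qed
qed

lemma finite_representatives:
  assumes "finite V"
  shows "\<exists>R. finite R \<and> R \<subseteq> bounded_fms V d \<and> (\<forall>\<theta>\<in>bounded_fms V d. \<exists>r\<in>R. equivalent \<theta> r)"
proof (induct d)
  case 0
  show ?case
  proof (rule finite_representatives_if_determined[of "Atom ` V"])
    show "finite (Atom ` V)" "Atom ` V \<subseteq> bounded_fms V 0"
      using assms by (auto simp: bounded_fms_iff)
    show "\<theta> \<in> \<Gamma> \<longleftrightarrow> \<theta> \<in> \<Gamma>'"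
      if \<Gamma>: "\<theta> \<in> bounded_fms V 0" "mcs \<Gamma>" "mcs \<Gamma>'" "\<Gamma> \<inter> Atom ` V = \<Gamma>' \<inter> Atom ` V"
      for \<theta> \<Gamma> \<Gamma>'
    proof (rule mcs_agree_on_bounded_fms[OF \<Gamma>(1-3)])
      show "Atom p \<in> \<Gamma> \<longleftrightarrow> Atom p \<in> \<Gamma>'" if "p \<in> V" for p
        using \<Gamma>(4) that by blast
    qed (simp add: bounded_fms_iff)
  qed
next
  case (Suc d)
  then obtain R where R: "finite R" "R \<subseteq> bounded_fms V d"
    "\<forall>\<theta>\<in>bounded_fms V d. \<exists>r\<in>R. equivalent \<theta> r"
    by blast
  let ?G = "Atom ` V \<union> (\<lambda>(a, c). Cond a c) ` (R \<times> R)"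
  have "?G \<subseteq> bounded_fms V (Suc d)"
  proof
    fix g assume "g \<in> ?G"
    then consider p where "g = Atom p" "p \<in> V" | a c where "g = Cond a c" "a \<in> R" "c \<in> R"
      by auto
    then show "g \<in> bounded_fms V (Suc d)"
    proof cases
      case 2
      then have "a \<in> bounded_fms V d" "c \<in> bounded_fms V d"
        using R(2) by blast+
      with 2 show ?thesis
        by (simp add: bounded_fms_iff)
    qed (simp add: bounded_fms_iff)
  qed
  then show ?case
  proof (rule finite_representatives_if_determined[of ?G, rotated])
    show "finite ?G"
      using assms R(1) by simp
    show "\<theta> \<in> \<Gamma> \<longleftrightarrow> \<theta> \<in> \<Gamma>'"
      if "\<theta> \<in> bounded_fms V (Suc d)" "mcs \<Gamma>" "mcs \<Gamma>'" "\<Gamma> \<inter> ?G = \<Gamma>' \<inter> ?G" for \<theta> \<Gamma> \<Gamma>'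
      using mcs_agree_by_Cond_representatives[OF R(3) that] .
  qed
qed

section \<open>Uniform interpolation\<close>

lemma uniform_forall:
  "\<exists>A. p \<notin> vars A \<and> vars A \<subseteq> vars \<phi> \<and> Imp A \<phi> \<in> L \<and>
       (\<forall>\<psi>. p \<notin> vars \<psi> \<longrightarrow> Imp \<psi> \<phi> \<in> L \<longrightarrow> Imp \<psi> A \<in> L)"
proof -
  let ?B = "bounded_fms (vars \<phi> - {p}) (cdepth \<phi>)"
  obtain R where R: "finite R" "R \<subseteq> ?B" "\<forall>\<theta>\<in>?B. \<exists>r\<in>R. equivalent \<theta> r"
    using finite_representatives[of "vars \<phi> - {p}" "cdepth \<phi>"] finite_vars by blast
  obtain rs where rs: "set rs = {r \<in> R. Imp r \<phi> \<in> L}"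
    using finite_list[of "{r \<in> R. Imp r \<phi> \<in> L}"] R(1) by auto
  show ?thesis
  proof (intro exI[of _ "Ors rs"] conjI allI impI)
    have "Ors rs \<in> ?B"
      using rs R(2) by (intro Ors_bounded_fms) blast
    then show "p \<notin> vars (Ors rs)" "vars (Ors rs) \<subseteq> vars \<phi>"
      by (auto simp: bounded_fms_iff)
    show "Imp (Ors rs) \<phi> \<in> L"
      by (rule CEplus_prop_closed[of "map (\<lambda>r. Imp r \<phi>) rs"]) (use rs in auto)
    show "Imp \<psi> (Ors rs) \<in> L" if \<psi>: "p \<notin> vars \<psi>" "Imp \<psi> \<phi> \<in> L" for \<psi>
    proof -
      obtain \<theta> where \<theta>: "\<theta> \<in> bounded_fms (vars \<psi> \<inter> vars \<phi>) (cdepth \<phi>)"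
        "Imp \<psi> \<theta> \<in> L" "Imp \<theta> \<phi> \<in> L"
        using \<psi>(2) by (rule bounded_interpolation)
      then have "\<theta> \<in> ?B"
        using \<psi>(1) by (auto simp: bounded_fms_iff)
      then obtain r where r: "r \<in> R" "Imp \<theta> r \<in> L" "Imp r \<theta> \<in> L"
        using R(3) by (auto simp: equivalent_def)
      have "Imp r \<phi> \<in> L"
        by (rule CEplus_prop2[OF _ r(3) \<theta>(3)]) auto
      then have "r \<in> set rs"
        using rs r(1) by simp
      have "Imp \<psi> r \<in> L"
        by (rule CEplus_prop2[OF _ \<theta>(2) r(2)]) auto
      then show ?thesis
        by (rule CEplus_prop1[rotated]) (use \<open>r \<in> set rs\<close> in auto)
    qed
  qed
qed

lemma uniform_exists:
  "\<exists>E. p \<notin> vars E \<and> vars E \<subseteq> vars \<phi> \<and> Imp \<phi> E \<in> L \<and>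
       (\<forall>\<psi>. p \<notin> vars \<psi> \<longrightarrow> Imp \<phi> \<psi> \<in> L \<longrightarrow> Imp E \<psi> \<in> L)"
proof -
  obtain A where A: "p \<notin> vars A" "vars A \<subseteq> vars (Neg \<phi>)" "Imp A (Neg \<phi>) \<in> L"
    "\<And>\<psi>. p \<notin> vars \<psi> \<Longrightarrow> Imp \<psi> (Neg \<phi>) \<in> L \<Longrightarrow> Imp \<psi> A \<in> L"
    using uniform_forall[of p "Neg \<phi>"] by blast
  show ?thesis
  proof (intro exI[of _ "Neg A"] conjI allI impI)
    show "p \<notin> vars (Neg A)" "vars (Neg A) \<subseteq> vars \<phi>"
      using A(1,2) by simp_all
    show "Imp \<phi> (Neg A) \<in> L"
      using A(3) by (rule CEplus_prop1[rotated]) auto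
    show "Imp (Neg A) \<psi> \<in> L" if "p \<notin> vars \<psi>" "Imp \<phi> \<psi> \<in> L" for \<psi>
    proof -
      have "Imp (Neg \<psi>) (Neg \<phi>) \<in> L"
        using that(2) by (rule CEplus_prop1[rotated]) auto
      then have "Imp (Neg \<psi>) A \<in> L"
        using that(1) A(4)[of "Neg \<psi>"] by simp
      then show ?thesis
        by (rule CEplus_prop1[rotated]) auto
    qed
  qed
qed

lemma UIP_L: "UIP L"
proof (unfold UIP_def, intro allI)
  fix \<phi> p
  show "\<exists>Ap Ep. p \<notin> vars Ap \<and> vars Ap \<subseteq> vars \<phi> \<and> p \<notin> vars Ep \<and> vars Ep \<subseteq> vars \<phi> \<and>
      Imp Ap \<phi> \<in> L \<and> (\<forall>\<psi>. p \<notin> vars \<psi> \<longrightarrow> Imp \<psi> \<phi> \<in> L \<longrightarrow> Imp \<psi> Ap \<in> L) \<and>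
      Imp \<phi> Ep \<in> L \<and> (\<forall>\<psi>. p \<notin> vars \<psi> \<longrightarrow> Imp \<phi> \<psi> \<in> L \<longrightarrow> Imp Ep \<psi> \<in> L)"
    using uniform_forall[of p \<phi>] uniform_exists[of p \<phi>] by blast
qed

end

lemma cem_logic_CKCEM: "cem_logic (axCM \<union> axCC \<union> axCN \<union> axCEM) False"
  by unfold_locales simp

lemma cem_logic_CKCEMID: "cem_logic (axCM \<union> axCC \<union> axCN \<union> axCEM \<union> axID) True"
  by unfold_locales simp

theorem mainTheorem9:
  shows "UIP CKCEM \<and> UIP CKCEMID \<and> CIP CKCEM \<and> CIP CKCEMID"
  unfolding CKCEM_def CKCEMID_def
  using cem_logic.UIP_L[OF cem_logic_CKCEM] cem_logic.UIP_L[OF cem_logic_CKCEMID]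
    cem_logic.CIP_L[OF cem_logic_CKCEM] cem_logic.CIP_L[OF cem_logic_CKCEMID]
  by blast

end
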